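(* Let $\chi:\mathcal H\to\mathcal H_L^\chi\otimes\mathcal H_R^\chi$ be a splitting map and $A\in\mathcal L(\mathcal H)$. Then $A$ is strictly $\chi$-local if and only if there exists a $\chi$-consistent $\tilde A\in\mathcal L(\mathcal H_L^\chi)$ such that $A=\chi^\dagger(\tilde A\otimes\mathbb 1)\chi$.
   Context: All Hilbert spaces are finite-dimensional and complex. A splitting map on $\mathcal H$ is an isometry $\chi:\mathcal H\to\mathcal H_L^\chi\otimes\mathcal H_R^\chi$; $\pi^\chi=\chi\chi^\dagger$. $\tilde A\in\mathcal L(\mathcal H_L^\chi)$ is $\chi$-consistent if $\pi^\chi(\tilde A\otimes\mathbb 1)=(\tilde A\otimes\mathbb 1)\pi^\chi$. $A\in\mathcal L(\mathcal H)$ is strictly $\chi$-local if there exists $\tilde A\in\mathcal L(\mathcal H_L^\chi)$ with $A\chi^\dagger=\chi^\dagger(\tilde A\otimes\mathbb 1)$ and $\chi A=(\tilde A\otimes\mathbb 1)\chi$. *)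

theory Defs
  imports Complex_Main "Jordan_Normal_Form.Matrix"
begin

text \<open>Finite-dimensional complex Hilbert spaces are modelled as C^n; linear maps as
complex matrices (w.r.t. orthonormal bases).  H_L = C^a, H_R = C^b, and
H_L \<otimes> H_R = C^(a*b) with basis index (i,k) \<mapsto> i*b + k (Kronecker convention).\<close>

definition adj :: "complex mat \<Rightarrow> complex mat" where
  "adj M = mat (dim_col M) (dim_row M) (\<lambda>(i,j). cnj (M $$ (j,i)))"

definition kron :: "complex mat \<Rightarrow> complex mat \<Rightarrow> complex mat" where
  "kron M N = mat (dim_row M * dim_row N) (dim_col M * dim_col N)
     (\<lambda>(i,j). M $$ (i div dim_row N, j div dim_col N) * N $$ (i mod dim_row N, j mod dim_col N))"

definition splitting_map :: "nat \<Rightarrow> nat \<Rightarrow> nat \<Rightarrow> complex mat \<Rightarrow> bool" where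
  "splitting_map n a b chi \<longleftrightarrow> chi \<in> carrier_mat (a*b) n \<and> adj chi * chi = 1\<^sub>m n"

definition proj :: "complex mat \<Rightarrow> complex mat" where
  "proj chi = chi * adj chi"

definition consistent :: "nat \<Rightarrow> complex mat \<Rightarrow> complex mat \<Rightarrow> bool" where
  "consistent b chi At \<longleftrightarrow>
     proj chi * kron At (1\<^sub>m b) = kron At (1\<^sub>m b) * proj chi"

definition strictly_local :: "nat \<Rightarrow> nat \<Rightarrow> complex mat \<Rightarrow> complex mat \<Rightarrow> bool" where
  "strictly_local a b chi A \<longleftrightarrow>
     (\<exists>At \<in> carrier_mat a a.
        A * adj chi = adj chi * kron At (1\<^sub>m b) \<and> chi * A = kron At (1\<^sub>m b) * chi)"

end

theory Submission
  imports Defs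
begin

(* For an isometry V, "A intertwines with K along V" (both V A = K V and A V* = V* K) says
   exactly that K commutes with the range projection V V* and that A is the compression
   V* K V.  The theorem is the special case V = chi, K = At \<otimes> 1. *)

lemma adj_carrier_mat [intro]: "M \<in> carrier_mat r c \<Longrightarrow> adj M \<in> carrier_mat c r"
  by (auto simp: adj_def)

lemma kron_one_carrier_mat:
  "M \<in> carrier_mat a a \<Longrightarrow> kron M (1\<^sub>m b) \<in> carrier_mat (a * b) (a * b)"
  by (auto simp: kron_def)

lemma proj_carrier_mat: "V \<in> carrier_mat m n \<Longrightarrow> proj V \<in> carrier_mat m m"
  unfolding proj_def by (rule mult_carrier_mat) auto

lemma compression_of_intertwiner:
  assumes V: "V \<in> carrier_mat m n" and iso: "adj V * V = 1\<^sub>m n"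
    and K: "K \<in> carrier_mat m m" and A: "A \<in> carrier_mat n n"
    and VA: "V * A = K * V"
  shows "A = adj V * K * V"
proof -
  have "A = (adj V * V) * A" using iso A by simp
  also have "\<dots> = adj V * (V * A)" using V A by (auto intro: assoc_mult_mat)
  also have "\<dots> = adj V * K * V" using VA V K by (auto intro: assoc_mult_mat[symmetric])
  finally show ?thesis .
qed

lemma intertwiner_commutes_proj:
  assumes V: "V \<in> carrier_mat m n" and K: "K \<in> carrier_mat m m" and A: "A \<in> carrier_mat n n"
    and AV: "A * adj V = adj V * K" and VA: "V * A = K * V"
  shows "proj V * K = K * proj V"
proof -
  have VV: "adj V \<in> carrier_mat n m" using V by auto
  have "proj V * K = V * (A * adj V)"
    unfolding proj_def AV by (rule assoc_mult_mat[OF V VV K])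
  also have "\<dots> = (V * A) * adj V" by (rule assoc_mult_mat[OF V A VV, symmetric])
  also have "\<dots> = K * proj V" unfolding VA proj_def by (rule assoc_mult_mat[OF K V VV])
  finally show ?thesis .
qed

lemma compression_intertwines:
  assumes V: "V \<in> carrier_mat m n" and iso: "adj V * V = 1\<^sub>m n"
    and K: "K \<in> carrier_mat m m" and comm: "proj V * K = K * proj V"
  shows "adj V * K * V * adj V = adj V * K" and "V * (adj V * K * V) = K * V"
proof -
  have VV: "adj V \<in> carrier_mat n m" using V by auto
  have VK: "adj V * K \<in> carrier_mat n m" using VV K by (rule mult_carrier_mat)
  have "adj V * K * V * adj V = adj V * K * proj V"
    unfolding proj_def by (rule assoc_mult_mat[OF VK V VV])
  also have "\<dots> = adj V * (proj V * K)"
    unfolding comm by (rule assoc_mult_mat[OF VV K proj_carrier_mat[OF V]])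
  also have "\<dots> = (adj V * V) * (adj V * K)"
    unfolding proj_def assoc_mult_mat[OF V VV K] by (rule assoc_mult_mat[OF VV V VK, symmetric])
  also have "\<dots> = adj V * K" unfolding iso by (rule left_mult_one_mat[OF VK])
  finally show "adj V * K * V * adj V = adj V * K" .
  have "V * (adj V * K * V) = proj V * K * V"
    unfolding proj_def
    by (simp only: assoc_mult_mat[OF V VK V, symmetric] assoc_mult_mat[OF V VV K])
  also have "\<dots> = K * (V * (adj V * V))"
    unfolding comm assoc_mult_mat[OF K proj_carrier_mat[OF V] V]
    unfolding proj_def by (simp only: assoc_mult_mat[OF V VV V])
  also have "\<dots> = K * V" unfolding iso right_mult_one_mat[OF V] ..
  finally show "V * (adj V * K * V) = K * V" .
qed

theorem intertwiner_iff_commutes_proj: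
  assumes V: "V \<in> carrier_mat m n" and iso: "adj V * V = 1\<^sub>m n"
    and K: "K \<in> carrier_mat m m" and A: "A \<in> carrier_mat n n"
  shows "(A * adj V = adj V * K \<and> V * A = K * V) \<longleftrightarrow>
         (proj V * K = K * proj V \<and> A = adj V * K * V)"
  using compression_of_intertwiner[OF V iso K A] intertwiner_commutes_proj[OF V K A]
    compression_intertwines[OF V iso K] by blast

theorem mainTheorem5:
  fixes n a b :: nat and chi A :: "complex mat"
  assumes "splitting_map n a b chi"
    and "A \<in> carrier_mat n n"
  shows "strictly_local a b chi A \<longleftrightarrow>
    (\<exists>At \<in> carrier_mat a a. consistent b chi At \<and> A = adj chi * kron At (1\<^sub>m b) * chi)"
proof -
  have chi: "chi \<in> carrier_mat (a * b) n" and iso: "adj chi * chi = 1\<^sub>m n"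
    using assms(1) by (auto simp: splitting_map_def)
  have "(A * adj chi = adj chi * kron At (1\<^sub>m b) \<and> chi * A = kron At (1\<^sub>m b) * chi) \<longleftrightarrow>
      (consistent b chi At \<and> A = adj chi * kron At (1\<^sub>m b) * chi)"
    if At: "At \<in> carrier_mat a a" for At
    unfolding consistent_def
    by (rule intertwiner_iff_commutes_proj[OF chi iso kron_one_carrier_mat[OF At] assms(2)])
  then show ?thesis unfolding strictly_local_def by blast
qed

end
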